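(* Let $\Sigma$ be an alphabet and $n\geq 1$. If $g\colon\mathcal{T}(\Sigma)^n\to\mathcal{T}(\Sigma)$ is WCP, then for all $\vec u,\vec v\in\Sigma^n$, the trees $g(\vec u)$ and $g(\vec v)$ are similar.
   Context: Let $\Sigma$ be an alphabet not containing $0,1$. A binary tree over $\Sigma$ is a finite set $t \subseteq \{0,1\}^*\Sigma$ such that for any $ua, vb \in t$ with $ua \neq vb$, $u$ is not a prefix of $v$ and $v$ is not a prefix of $u$; $\mathcal{T}(\Sigma)$ is the set of such trees, $\mathbf 0=\emptyset$, each letter $a$ is identified with $\{a\}$, and $t\star t' = 0.t\cup 1.t'$. Every map $h\colon\Sigma\to\mathcal{T}(\Sigma)$ (in particular every map $\Sigma\to\Sigma$) extends uniquely to an endomorphism of $\langle\mathcal{T}(\Sigma),\star\rangle$, still denoted $h$. A function $g\colon\mathcal{T}(\Sigma)^n\to\mathcal{T}(\Sigma)$ is WCP if for every idempotent mapping $h\colon\Sigma\to\Sigma$ and all $\vec u,\vec v\in\Sigma^n$, $h(\vec u)=h(\vec v)$ implies $h(g(\vec u))=h(g(\vec v))$, where $h(\langle u_1,\ldots,u_n\rangle)=\langle h(u_1),\ldots,h(u_n)\rangle$. For $a\in\Sigma$, $\nu_a$ is the endomorphism sending every letter to $a$; trees $t,t'$ are similar if $\nu_a(t)=\nu_a(t')$ for some (equivalently every) $a\in\Sigma$. *)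

theory Defs
  imports Main "HOL-Library.Sublist"
begin

text \<open>Letters of the alphabet are elements of a type 'a (the alphabet is UNIV :: 'a set);
  the digits 0,1 are encoded as False,True, so they are disjoint from the letters.
  A word u a in {0,1}^* Sigma is a pair (u, a).\<close>

type_synonym 'a btree = "(bool list \<times> 'a) set"

definition is_tree :: "'a btree \<Rightarrow> bool" where
  "is_tree t \<longleftrightarrow> finite t \<and>
     (\<forall>u a v b. (u, a) \<in> t \<and> (v, b) \<in> t \<and> (u, a) \<noteq> (v, b) \<longrightarrow>
        \<not> prefix u v \<and> \<not> prefix v u)"

definition letter :: "'a \<Rightarrow> 'a btree" where
  "letter a = {([], a)}"

definition tstar :: "'a btree \<Rightarrow> 'a btree \<Rightarrow> 'a btree" (infixl "\<star>" 70) where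
  "t \<star> t' = (\<lambda>(u, a). (False # u, a)) ` t \<union> (\<lambda>(u, a). (True # u, a)) ` t'"

text \<open>The unique endomorphism extending h :: Sigma => T(Sigma) (substitution of trees for leaves).\<close>
definition tsubst :: "('a \<Rightarrow> 'a btree) \<Rightarrow> 'a btree \<Rightarrow> 'a btree" where
  "tsubst h t = {(u @ w, b) | u w a b. (u, a) \<in> t \<and> (w, b) \<in> h a}"

definition lmap :: "('a \<Rightarrow> 'a) \<Rightarrow> 'a btree \<Rightarrow> 'a btree" where
  "lmap h = tsubst (\<lambda>a. letter (h a))"

definition WCP :: "nat \<Rightarrow> ('a btree list \<Rightarrow> 'a btree) \<Rightarrow> bool" where
  "WCP n g \<longleftrightarrow> (\<forall>h :: 'a \<Rightarrow> 'a. h \<circ> h = h \<longrightarrow>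
     (\<forall>us vs :: 'a list. length us = n \<and> length vs = n \<and> map h us = map h vs \<longrightarrow>
        lmap h (g (map letter us)) = lmap h (g (map letter vs))))"

definition nu :: "'a \<Rightarrow> 'a btree \<Rightarrow> 'a btree" where
  "nu a = lmap (\<lambda>_. a)"

definition similar :: "'a btree \<Rightarrow> 'a btree \<Rightarrow> bool" where
  "similar t t' \<longleftrightarrow> (\<exists>a. nu a t = nu a t')"

end

theory Submission
  imports Defs
begin

text \<open>A constant letter map \<open>\<lambda>_. a\<close> is idempotent and identifies any two words of the same
  length, so weak compatibility applied to it yields \<open>nu a (g us) = nu a (g vs)\<close>.\<close>

lemma idempotent_const: "(\<lambda>_. c) \<circ> (\<lambda>_. c) = (\<lambda>_. c)"
  by (simp add: comp_def)

lemma map_const_eq_iff_length_eq: "map (\<lambda>_. c) xs = map (\<lambda>_. c) ys \<longleftrightarrow> length xs = length ys"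
  by (simp add: map_replicate_const)

lemma WCP_imp_similar:
  assumes "WCP n g" and "length us = n" and "length vs = n"
  shows "similar (g (map letter us)) (g (map letter vs))"
proof -
  fix a :: 'a
  have "map (\<lambda>_. a) us = map (\<lambda>_. a) vs"
    using assms(2,3) by (simp add: map_const_eq_iff_length_eq)
  with assms idempotent_const[of a]
  have "nu a (g (map letter us)) = nu a (g (map letter vs))"
    unfolding WCP_def nu_def by blast
  then show ?thesis
    unfolding similar_def by blast
qed

theorem mainTheorem6:
  fixes g :: "'a btree list \<Rightarrow> 'a btree" and n :: nat
  assumes "n \<ge> 1"
    and "\<forall>ts. length ts = n \<and> (\<forall>t\<in>set ts. is_tree t) \<longrightarrow> is_tree (g ts)"
    and "WCP n g"
  shows "\<forall>us vs :: 'a list. length us = n \<and> length vs = n \<longrightarrow>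
           similar (g (map letter us)) (g (map letter vs))"
  using WCP_imp_similar[OF assms(3)] by blast

end
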